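(* Let $a,n\in\mathbb{Z}^+$. Let $S=\mathbb{Z}[x]/(x^n-a)$ and for each $k\ge 0$ let $f_k(x)$ be the image of $(x+1)^k$ in $S$. Then $$\sqrt[n]{a} = \lim_{k\to\infty}\frac{f_{k+1}(1)}{f_k(1)} - 1 \quad\text{(in } \mathbb{R}).$$
   Context: The image of $(x+1)^k$ in $S$ is identified with its unique representative in $\mathbb{Z}[x]$ of degree less than $n$ (the remainder of $(x+1)^k$ upon division by $x^n-a$), and $f_k(1)$ denotes the evaluation of this representative at $x=1$; explicitly $f_k(1)=\sum_{j=0}^k\binom{k}{j}a^{\lfloor j/n\rfloor}$. $\sqrt[n]{a}$ denotes the positive real $n$-th root of $a$. *)

theory Defs
  imports "HOL-Analysis.Analysis" "HOL-Computational_Algebra.Polynomial"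
begin

definition modulus_poly :: "int \<Rightarrow> nat \<Rightarrow> real poly" where
  "modulus_poly a n = monom 1 n - [:of_int a:]"

text \<open>Representative of the image of (x+1)^k in Z[x]/(x^n - a): the remainder of
  (x+1)^k upon division by the monic polynomial x^n - a (computed over the reals;
  since x^n - a is monic this remainder has integer coefficients and is the unique
  representative of degree < n).\<close>
definition f_rep :: "int \<Rightarrow> nat \<Rightarrow> nat \<Rightarrow> real poly" where
  "f_rep a n k = ([:1, 1:] ^ k) mod modulus_poly a n"

end

theory Submission
  imports Defs
begin

(* Let r be the positive n-th root of a. Since a^(j div n) = r^j / r^(j mod n), the value f_k(1)
   equals the sum over i < n of r^-i S_i(k), where S_i(k) collects the terms of the binomial
   expansion of (1 + r)^k whose exponent is congruent to i mod n. Filtering with the n-th roots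
   of unity z gives n S_i(k) = sum of z^-i (1 + r z)^k, and |1 + r z| < 1 + r unless z = 1, so
   S_i(k) / (1 + r)^k tends to 1/n. Thus f_k(1) / (1 + r)^k has a positive limit, and the ratio
   of consecutive values tends to 1 + r. *)

lemma degree_modulus_poly:
  assumes "n > 0"
  shows "degree (modulus_poly a n) = n"
proof -
  have "modulus_poly a n = monom 1 n + (- [:of_int a:])"
    by (simp add: modulus_poly_def)
  also have "degree \<dots> = n"
    using assms by (subst degree_add_eq_left) (simp_all add: degree_monom_eq)
  finally show ?thesis .
qed

lemma modulus_poly_dvd_monom_reduce:
  "modulus_poly a n dvd monom 1 j - smult (of_int a ^ (j div n)) (monom 1 (j mod n))"
proof -
  let ?q = "j div n" and ?x = "monom (1::real) n" and ?c = "[:of_int a:] :: real poly"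
  have "?x - ?c dvd ?x ^ ?q - ?c ^ ?q"
    unfolding power_diff_sumr2 by simp
  then have "modulus_poly a n dvd monom 1 (j mod n) * (?x ^ ?q - ?c ^ ?q)"
    unfolding modulus_poly_def by simp
  also have "monom 1 (j mod n) * (?x ^ ?q - ?c ^ ?q)
           = monom 1 j - smult (of_int a ^ ?q) (monom 1 (j mod n))"
    by (simp add: right_diff_distrib monom_power mult_monom poly_const_pow smult_monom
          flip: smult_monom)
  finally show ?thesis .
qed

lemma f_rep_explicit:
  assumes "n > 0"
  shows "f_rep a n k =
    (\<Sum>j\<le>k. smult (of_nat (k choose j) * of_int a ^ (j div n)) (monom 1 (j mod n)))"
    (is "_ = ?R")
proof -
  have "[:1, 1:] = monom (1::real) 1 + 1"
    by (simp add: monom_Suc monom_0 one_pCons)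
  then have binomial: "[:1, 1:] ^ k = (\<Sum>j\<le>k. smult (of_nat (k choose j)) (monom (1::real) j))"
    by (simp add: binomial_ring monom_power of_nat_poly smult_monom mult_monom)
  have "[:1, 1:] ^ k - ?R = (\<Sum>j\<le>k. smult (of_nat (k choose j))
          (monom 1 j - smult (of_int a ^ (j div n)) (monom 1 (j mod n))))"
    unfolding binomial by (simp add: sum_subtractf smult_diff_right)
  then have "([:1, 1:] ^ k - ?R) mod modulus_poly a n = 0"
    by (simp add: dvd_sum dvd_smult modulus_poly_dvd_monom_reduce)
  moreover have "?R mod modulus_poly a n = ?R"
  proof (rule mod_poly_less)
    have "degree ?R \<le> n - 1"
    proof (intro degree_sum_le order.trans[OF degree_smult_le])
      show "degree (monom (1::real) (j mod n)) \<le> n - 1" for j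
        using mod_less_divisor[OF assms, of j] by (simp add: degree_monom_eq)
    qed simp
    then show "degree ?R < degree (modulus_poly a n)"
      using assms by (simp add: degree_modulus_poly)
  qed
  ultimately show ?thesis
    unfolding f_rep_def by (simp add: poly_mod_diff_left)
qed

lemma poly_f_rep_1:
  assumes "n > 0"
  shows "poly (f_rep a n k) 1 = (\<Sum>j\<le>k. of_nat (k choose j) * of_int a ^ (j div n))"
  by (simp add: f_rep_explicit[OF assms] poly_sum poly_monom)

definition unity_root :: "nat \<Rightarrow> complex" where
  "unity_root n = exp (2 * of_real pi * \<i> / of_nat n)"

lemma unity_root_nonzero [simp]: "unity_root n \<noteq> 0"
  by (simp add: unity_root_def)

lemma unity_root_power: "unity_root n ^ m = exp (2 * of_real pi * \<i> * of_nat m / of_nat n)"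
  unfolding unity_root_def by (simp flip: exp_of_nat_mult) (simp add: field_simps)

lemma unity_root_power_eq_iff:
  assumes "n > 0"
  shows "unity_root n ^ j = unity_root n ^ i \<longleftrightarrow> j mod n = i mod n"
  using assms unfolding unity_root_power by (intro complex_root_unity_eq) simp

lemma norm_unity_root_power [simp]: "norm (unity_root n ^ m) = 1"
  unfolding unity_root_power by (simp add: norm_exp_eq_Re)

lemma sum_powers_root_of_unity:
  fixes u :: "'a :: field"
  assumes "u ^ n = 1"
  shows "(\<Sum>t<n. u ^ t) = (if u = 1 then of_nat n else 0)"
  using assms by (simp add: geometric_sum)

lemma sum_unity_root_power_filter:
  assumes "n > 0"
  shows "(\<Sum>t<n. (unity_root n ^ j / unity_root n ^ i) ^ t) =
           (if j mod n = i mod n then of_nat n else 0)"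
proof -
  have "unity_root n ^ n = 1"
    using unity_root_power_eq_iff[OF assms, of n 0] by simp
  then have "(unity_root n ^ m) ^ n = 1" for m
    by (metis mult.commute power_mult power_one)
  then have "(unity_root n ^ j / unity_root n ^ i) ^ n = 1"
    by (simp add: power_divide)
  then show ?thesis
    using assms by (simp add: sum_powers_root_of_unity unity_root_power_eq_iff)
qed

lemma binomial_residue_class_sum:
  assumes "n > 0"
  shows "(\<Sum>j\<le>k. if j mod n = i mod n then of_nat (k choose j) * w ^ j else 0) =
         (\<Sum>t<n. (w * unity_root n ^ t + 1) ^ k / unity_root n ^ (t * i)) / of_nat n"
proof -
  let ?z = "unity_root n"
  have "(\<Sum>t<n. (w * ?z ^ t + 1) ^ k / ?z ^ (t * i))
      = (\<Sum>t<n. \<Sum>j\<le>k. of_nat (k choose j) * w ^ j * (?z ^ j / ?z ^ i) ^ t)"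
    by (simp add: binomial_ring sum_divide_distrib power_mult_distrib power_divide
          mult_ac flip: power_mult)
  also have "\<dots> = (\<Sum>j\<le>k. of_nat (k choose j) * w ^ j * (\<Sum>t<n. (?z ^ j / ?z ^ i) ^ t))"
    by (subst sum.swap) (simp add: sum_distrib_left)
  also have "\<dots> = of_nat n * (\<Sum>j\<le>k. if j mod n = i mod n then of_nat (k choose j) * w ^ j else 0)"
    using assms by (auto simp: sum_unity_root_power_filter sum_distrib_left intro!: sum.cong)
  finally show ?thesis
    using assms by simp
qed

lemma norm_real_mult_add_one_less:
  fixes w :: complex
  assumes "norm w = 1" "w \<noteq> 1" "r > 0"
  shows "norm (of_real r * w + 1) < 1 + r"
proof -
  have "norm (of_real r * w + 1) \<noteq> norm (of_real r * w) + norm (1::complex)"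
    using assms by (subst norm_triangle_eq) (simp add: norm_mult scaleR_conv_of_real)
  moreover have "norm (of_real r * w + 1) \<le> norm (of_real r * w) + norm (1::complex)"
    by (rule norm_triangle_ineq)
  ultimately show ?thesis
    using assms by (simp add: norm_mult)
qed

lemma tendsto_binomial_residue_class:
  fixes r :: real
  assumes "n > 0" "r > 0"
  shows "(\<lambda>k. (\<Sum>j\<le>k. if j mod n = i mod n then (k choose j) * r ^ j else 0) / (1 + r) ^ k)
           \<longlonglongrightarrow> 1 / n"
proof -
  let ?z = "unity_root n"
  define S where "S k = (\<Sum>j\<le>k. if j mod n = i mod n then (k choose j) * r ^ j else 0)" for k
  define q where "q t = (of_real r * ?z ^ t + 1) / of_real (1 + r)" for t
  have S_eq: "of_real (S k / (1 + r) ^ k) = (\<Sum>t<n. q t ^ k / ?z ^ (t * i)) / of_nat n" for k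
  proof -
    have "of_real (S k)
        = (\<Sum>j\<le>k. if j mod n = i mod n then of_nat (k choose j) * complex_of_real r ^ j else 0)"
      unfolding S_def by (auto simp: of_real_sum intro!: sum.cong)
    also have "\<dots> = (\<Sum>t<n. (of_real r * ?z ^ t + 1) ^ k / ?z ^ (t * i)) / of_nat n"
      by (rule binomial_residue_class_sum[OF assms(1)])
    finally show ?thesis
      unfolding of_real_divide of_real_power
      by (simp only:) (simp add: q_def power_divide sum_divide_distrib mult_ac)
  qed
  have term_lim: "(\<lambda>k. q t ^ k / ?z ^ (t * i)) \<longlonglongrightarrow> (if t = 0 then 1 else 0)" if "t < n" for t
  proof (cases "t = 0")
    case True
    have "q 0 = 1"
      using assms(2) by (simp add: q_def) (simp add: complex_eq_iff)
    with True show ?thesis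
      by simp
  next
    case False
    with that have "?z ^ t \<noteq> 1"
      using unity_root_power_eq_iff[OF assms(1), of t 0] by simp
    then have "norm (q t) < 1"
      using norm_real_mult_add_one_less[of "?z ^ t" r] assms(2)
      unfolding q_def norm_divide norm_of_real by simp
    with False show ?thesis
      by (simp add: LIMSEQ_power_zero tendsto_divide_zero)
  qed
  have "(\<lambda>k. of_real (S k / (1 + r) ^ k))
          \<longlonglongrightarrow> (\<Sum>t<n. if t = 0 then 1 else 0) / (of_nat n :: complex)"
    unfolding S_eq using term_lim assms(1) by (intro tendsto_divide tendsto_const tendsto_sum) auto
  also have "(\<Sum>t<n. if t = 0 then 1 else 0) / (of_nat n :: complex) = of_real (1 / n)"
    using assms(1) by simp
  finally show ?thesis
    unfolding S_def tendsto_of_real_iff .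
qed

lemma sum_regroup_mod:
  fixes n :: nat
  assumes "n > 0"
  shows "(\<Sum>j\<in>A. f j (j mod n)) = (\<Sum>i<n. \<Sum>j\<in>A. if j mod n = i then f j i else 0)"
proof -
  have "(\<Sum>i<n. if j mod n = i then f j i else 0) = f j (j mod n)" for j
    using assms by simp
  then show ?thesis
    by (subst sum.swap) simp
qed

lemma tendsto_ratio_of_geometric_asymp:
  fixes g :: "nat \<Rightarrow> real"
  assumes "(\<lambda>k. g k / q ^ k) \<longlonglongrightarrow> L" "L \<noteq> 0" "q \<noteq> 0"
  shows "(\<lambda>k. g (Suc k) / g k) \<longlonglongrightarrow> q"
proof -
  have "(\<lambda>k. q * (g (Suc k) / q ^ Suc k) / (g k / q ^ k)) \<longlonglongrightarrow> q * L / L"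
    using assms by (intro tendsto_intros LIMSEQ_Suc) auto
  also have "(\<lambda>k. q * (g (Suc k) / q ^ Suc k) / (g k / q ^ k)) = (\<lambda>k. g (Suc k) / g k)"
    using assms(3) by (simp add: field_simps)
  also have "q * L / L = q"
    using assms(2) by simp
  finally show ?thesis .
qed

lemma poly_f_rep_1_residue_classes:
  fixes r :: real
  assumes "n > 0" "r > 0" "r ^ n = of_int a"
  shows "poly (f_rep a n k) 1 =
    (\<Sum>i<n. (\<Sum>j\<le>k. if j mod n = i mod n then (k choose j) * r ^ j else 0) / r ^ i)"
proof -
  have a_power: "of_int a ^ (j div n) = r ^ j / r ^ (j mod n)" for j
  proof -
    have "r ^ j = of_int a ^ (j div n) * r ^ (j mod n)"
      by (metis assms(3) div_mult_mod_eq power_add power_mult mult.commute)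
    then show ?thesis
      using assms(2) by simp
  qed
  have "poly (f_rep a n k) 1 = (\<Sum>j\<le>k. (k choose j) * r ^ j / r ^ (j mod n))"
    using assms(1) by (simp add: poly_f_rep_1 a_power)
  also have "\<dots> = (\<Sum>i<n. \<Sum>j\<le>k. if j mod n = i then (k choose j) * r ^ j / r ^ i else 0)"
    using sum_regroup_mod[OF assms(1), of "\<lambda>j i. (k choose j) * r ^ j / r ^ i"] by simp
  finally show ?thesis
    by (auto simp: sum_divide_distrib intro!: sum.cong)
qed

lemma tendsto_poly_f_rep_1_over_power:
  fixes r :: real
  assumes "n > 0" "r > 0" "r ^ n = of_int a"
  shows "(\<lambda>k. poly (f_rep a n k) 1 / (1 + r) ^ k) \<longlonglongrightarrow> (\<Sum>i<n. 1 / n / r ^ i)"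
proof -
  define S where "S i k = (\<Sum>j\<le>k. if j mod n = i mod n then (k choose j) * r ^ j else 0)" for i k
  have "(\<lambda>k. poly (f_rep a n k) 1 / (1 + r) ^ k) = (\<lambda>k. \<Sum>i<n. S i k / (1 + r) ^ k / r ^ i)"
  proof
    fix k
    have "poly (f_rep a n k) 1 = (\<Sum>i<n. S i k / r ^ i)"
      unfolding S_def using assms by (rule poly_f_rep_1_residue_classes)
    then show "poly (f_rep a n k) 1 / (1 + r) ^ k = (\<Sum>i<n. S i k / (1 + r) ^ k / r ^ i)"
      by (simp add: sum_divide_distrib mult.commute)
  qed
  also have "\<dots> \<longlonglongrightarrow> (\<Sum>i<n. 1 / n / r ^ i)"
    unfolding S_def using assms(1,2)
    by (intro tendsto_sum tendsto_divide tendsto_const tendsto_binomial_residue_class) auto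
  finally show ?thesis .
qed

theorem lemma6p1:
  fixes a :: int and n :: nat
  assumes "a > 0" and "n > 0"
  shows "(\<lambda>k. poly (f_rep a n (k + 1)) 1 / poly (f_rep a n k) 1 - 1)
           \<longlonglongrightarrow> root n (of_int a)"
proof -
  define r where "r = root n (of_int a)"
  have "r > 0" and "r ^ n = of_int a"
    using assms by (simp_all add: r_def)
  with assms(2) have "(\<lambda>k. poly (f_rep a n k) 1 / (1 + r) ^ k) \<longlonglongrightarrow> (\<Sum>i<n. 1 / n / r ^ i)"
    by (rule tendsto_poly_f_rep_1_over_power)
  moreover have "(\<Sum>i<n. 1 / n / r ^ i) > 0"
    using \<open>r > 0\<close> assms(2) by (intro sum_pos) auto
  ultimately have "(\<lambda>k. poly (f_rep a n (Suc k)) 1 / poly (f_rep a n k) 1) \<longlonglongrightarrow> 1 + r"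
    using \<open>r > 0\<close> by (intro tendsto_ratio_of_geometric_asymp) auto
  from tendsto_diff[OF this tendsto_const[of 1]] show ?thesis
    unfolding r_def by simp
qed

end
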